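(* Let $\alpha_i,\beta_i,\gamma_i,\delta_i\in(0,\pi)$, $i=1,\dots,4$. Replace, for all $i=1,\dots,4$, the numbers $\alpha_i,\beta_i,\gamma_i,\delta_i$ by $\pi-\alpha_i,\pi-\beta_i,\pi-\gamma_i,\pi-\delta_i$. This replacement preserves the values $M_i,r_i,s_i,f_i$ (whenever defined), and preserves each of the following conditions: (E) $\alpha_i\pm\beta_i\pm\gamma_i\pm\delta_i\not\equiv0\pmod{2\pi}$ for all sign choices; (C1) $M_1=M_2=M_3=M_4$; (C2) $r_1=r_2$, $s_1=s_4$, $r_3=r_4$, $s_2=s_3$; (C3) $t_1+e_1t_2+e_2t_3+e_3t_4\in\Lambda$ for some $e_1,e_2,e_3\in\{\pm1\}$.
   Context: $\sigma_i=(\alpha_i+\beta_i+\gamma_i+\delta_i)/2$, $\overline{\alpha}_i=\sigma_i-\alpha_i$, etc.; $a_i=\sin\alpha_i/\sin\overline{\alpha}_i$, $b_i=\sin\beta_i/\sin\overline{\beta}_i$, $c_i=\sin\gamma_i/\sin\overline{\gamma}_i$, $d_i=\sin\delta_i/\sin\overline{\delta}_i$, $M_i=a_ib_ic_id_i$, $r_i=a_id_i$, $s_i=c_id_i$, $f_i=a_ic_i$. When $M:=M_1=\dots=M_4$: $k=\sqrt{1-M}$ if $M<1$, $k=\sqrt{1-M^{-1}}$ if $M>1$; $k'=\sqrt{1-k^2}$; $K=\int_0^1\frac{dx}{\sqrt{(1-x^2)(1-k^2x^2)}}$, $K'=\int_0^1\frac{dx}{\sqrt{(1-x^2)(1-k'^2x^2)}}$;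 $\Lambda=\{4Km+2\mathbf{i}K'n\}_{m,n\in\mathbb{Z}}$ if $M<1$, $\Lambda=\{4Km+(2K+2\mathbf{i}K')n\}_{m,n\in\mathbb{Z}}$ if $M>1$; $p_i=\sqrt{r_i-1}$, $q_i=\sqrt{s_i-1}$, each in $\mathbb{R}_{>0}\cup\mathbf{i}\mathbb{R}_{>0}$; $t_i$ is the complex number with $\operatorname{dn}(t_i,k)=\sqrt{f_i}$ if $M<1$, $=1/\sqrt{f_i}$ if $M>1$, on the open segment: if $\sigma_i<\pi$: $(0,\mathbf{i}K')$ when $p_iq_i>0$, $(K,K+\mathbf{i}K')$ when $p_iq_i\in\mathbf{i}\mathbb{R}_{>0}$, $(2K,2K+\mathbf{i}K')$ when $p_iq_i<0$; if $\sigma_i>\pi$: respectively $(2K,2K+\mathbf{i}K')$, $(3K,3K+\mathbf{i}K')$, $(0,\mathbf{i}K')$. *)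

theory Defs
  imports "HOL-Analysis.Analysis"
begin

type_synonym angfun = "nat \<Rightarrow> real"

text \<open>Angle data: four functions al, be, ga, de indexed by i = 1..4.\<close>

definition sig :: "angfun \<Rightarrow> angfun \<Rightarrow> angfun \<Rightarrow> angfun \<Rightarrow> nat \<Rightarrow> real" where
  "sig al be ga de i = (al i + be i + ga i + de i) / 2"

definition acoef :: "angfun \<Rightarrow> angfun \<Rightarrow> angfun \<Rightarrow> angfun \<Rightarrow> nat \<Rightarrow> real" where
  "acoef al be ga de i = sin (al i) / sin (sig al be ga de i - al i)"

definition bcoef :: "angfun \<Rightarrow> angfun \<Rightarrow> angfun \<Rightarrow> angfun \<Rightarrow> nat \<Rightarrow> real" where
  "bcoef al be ga de i = sin (be i) / sin (sig al be ga de i - be i)"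

definition ccoef :: "angfun \<Rightarrow> angfun \<Rightarrow> angfun \<Rightarrow> angfun \<Rightarrow> nat \<Rightarrow> real" where
  "ccoef al be ga de i = sin (ga i) / sin (sig al be ga de i - ga i)"

definition dcoef :: "angfun \<Rightarrow> angfun \<Rightarrow> angfun \<Rightarrow> angfun \<Rightarrow> nat \<Rightarrow> real" where
  "dcoef al be ga de i = sin (de i) / sin (sig al be ga de i - de i)"

definition coefs_defined :: "angfun \<Rightarrow> angfun \<Rightarrow> angfun \<Rightarrow> angfun \<Rightarrow> nat \<Rightarrow> bool" where
  "coefs_defined al be ga de i \<longleftrightarrow>
     sin (sig al be ga de i - al i) \<noteq> 0 \<and> sin (sig al be ga de i - be i) \<noteq> 0 \<and>
     sin (sig al be ga de i - ga i) \<noteq> 0 \<and> sin (sig al be ga de i - de i) \<noteq> 0"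

definition Mval :: "angfun \<Rightarrow> angfun \<Rightarrow> angfun \<Rightarrow> angfun \<Rightarrow> nat \<Rightarrow> real" where
  "Mval al be ga de i = acoef al be ga de i * bcoef al be ga de i * ccoef al be ga de i * dcoef al be ga de i"

definition rval :: "angfun \<Rightarrow> angfun \<Rightarrow> angfun \<Rightarrow> angfun \<Rightarrow> nat \<Rightarrow> real" where
  "rval al be ga de i = acoef al be ga de i * dcoef al be ga de i"

definition sval :: "angfun \<Rightarrow> angfun \<Rightarrow> angfun \<Rightarrow> angfun \<Rightarrow> nat \<Rightarrow> real" where
  "sval al be ga de i = ccoef al be ga de i * dcoef al be ga de i"

definition fval :: "angfun \<Rightarrow> angfun \<Rightarrow> angfun \<Rightarrow> angfun \<Rightarrow> nat \<Rightarrow> real" where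
  "fval al be ga de i = acoef al be ga de i * ccoef al be ga de i"

definition condE :: "angfun \<Rightarrow> angfun \<Rightarrow> angfun \<Rightarrow> angfun \<Rightarrow> bool" where
  "condE al be ga de \<longleftrightarrow>
     (\<forall>i\<in>{1..4}. \<forall>e1\<in>{-1,1::real}. \<forall>e2\<in>{-1,1::real}. \<forall>e3\<in>{-1,1::real}. \<forall>m::int.
        al i + e1 * be i + e2 * ga i + e3 * de i \<noteq> 2 * pi * of_int m)"

definition condC1 :: "angfun \<Rightarrow> angfun \<Rightarrow> angfun \<Rightarrow> angfun \<Rightarrow> bool" where
  "condC1 al be ga de \<longleftrightarrow>
     Mval al be ga de 1 = Mval al be ga de 2 \<and> Mval al be ga de 2 = Mval al be ga de 3 \<and>
     Mval al be ga de 3 = Mval al be ga de 4"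

definition condC2 :: "angfun \<Rightarrow> angfun \<Rightarrow> angfun \<Rightarrow> angfun \<Rightarrow> bool" where
  "condC2 al be ga de \<longleftrightarrow>
     rval al be ga de 1 = rval al be ga de 2 \<and> sval al be ga de 1 = sval al be ga de 4 \<and>
     rval al be ga de 3 = rval al be ga de 4 \<and> sval al be ga de 2 = sval al be ga de 3"

text \<open>Complete elliptic integral of the first kind (improper integral, Henstock-Kurzweil).\<close>
definition ellK :: "real \<Rightarrow> real" where
  "ellK k = integral {0..1} (\<lambda>x. 1 / sqrt ((1 - x\<^sup>2) * (1 - k\<^sup>2 * x\<^sup>2)))"

definition modk :: "real \<Rightarrow> real" where
  "modk M = (if M < 1 then sqrt (1 - M) else sqrt (1 - 1 / M))"

definition compmod :: "real \<Rightarrow> real" where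
  "compmod k = sqrt (1 - k\<^sup>2)"

text \<open>Jacobi theta functions theta_3, theta_4 with nome q (DLMF 20.2.3, 20.2.4).\<close>
definition theta3 :: "real \<Rightarrow> complex \<Rightarrow> complex" where
  "theta3 q z = 1 + 2 * (\<Sum>n. complex_of_real (q ^ ((n + 1)\<^sup>2)) * cos (2 * of_nat (n + 1) * z))"

definition theta4 :: "real \<Rightarrow> complex \<Rightarrow> complex" where
  "theta4 q z = 1 + 2 * (\<Sum>n. complex_of_real ((-1) ^ (n + 1) * q ^ ((n + 1)\<^sup>2)) * cos (2 * of_nat (n + 1) * z))"

text \<open>Jacobi elliptic function dn(u,k) for complex u (DLMF 22.2.6):
  dn(u,k) = theta4(0,q)/theta3(0,q) * theta3(zeta,q)/theta4(zeta,q),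
  zeta = pi u / (2K), q = exp(-pi K'/K).\<close>
definition jdn :: "complex \<Rightarrow> real \<Rightarrow> complex" where
  "jdn u k = (let K = ellK k; K' = ellK (compmod k); q = exp (- pi * K' / K);
               z = complex_of_real pi * u / complex_of_real (2 * K)
           in theta4 q 0 / theta3 q 0 * (theta3 q z / theta4 q z))"

definition latt :: "real \<Rightarrow> complex set" where
  "latt M = (let k = modk M; K = ellK k; K' = ellK (compmod k) in
     if M < 1 then {complex_of_real (4 * K * of_int m) + \<i> * complex_of_real (2 * K' * of_int n) | m n. True}
     else {complex_of_real (4 * K * of_int m) + complex_of_real (of_int n) * (complex_of_real (2 * K) + \<i> * complex_of_real (2 * K')) | m n. True})"

text \<open>p_i = sqrt(r_i - 1), q_i = sqrt(s_i - 1) in R_{>0} or i R_{>0}: principal square root.\<close>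
definition pval :: "angfun \<Rightarrow> angfun \<Rightarrow> angfun \<Rightarrow> angfun \<Rightarrow> nat \<Rightarrow> complex" where
  "pval al be ga de i = csqrt (complex_of_real (rval al be ga de i - 1))"

definition qval :: "angfun \<Rightarrow> angfun \<Rightarrow> angfun \<Rightarrow> angfun \<Rightarrow> nat \<Rightarrow> complex" where
  "qval al be ga de i = csqrt (complex_of_real (sval al be ga de i - 1))"

definition tprop :: "angfun \<Rightarrow> angfun \<Rightarrow> angfun \<Rightarrow> angfun \<Rightarrow> nat \<Rightarrow> complex \<Rightarrow> bool" where
  "tprop al be ga de i t \<longleftrightarrow>
    (let M = Mval al be ga de i; k = modk M; K = ellK k; K' = ellK (compmod k);
         f = fval al be ga de i;
         target = (if M < 1 then csqrt (complex_of_real f) else 1 / csqrt (complex_of_real f));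
         pq = pval al be ga de i * qval al be ga de i;
         A = (if sig al be ga de i < pi then
                (if pq \<in> \<real> \<and> 0 < Re pq then 0
                 else if Re pq = 0 \<and> 0 < Im pq then K else 2 * K)
              else
                (if pq \<in> \<real> \<and> 0 < Re pq then 2 * K
                 else if Re pq = 0 \<and> 0 < Im pq then 3 * K else 0))
     in jdn t k = target \<and>
        t \<in> open_segment (complex_of_real A) (complex_of_real A + \<i> * complex_of_real K'))"

definition tval :: "angfun \<Rightarrow> angfun \<Rightarrow> angfun \<Rightarrow> angfun \<Rightarrow> nat \<Rightarrow> complex" where
  "tval al be ga de i = (THE t. tprop al be ga de i t)"

text \<open>Condition (C3), including that all the quantities involved are defined.\<close>
definition condC3 :: "angfun \<Rightarrow> angfun \<Rightarrow> angfun \<Rightarrow> angfun \<Rightarrow> bool" where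
  "condC3 al be ga de \<longleftrightarrow>
     condC1 al be ga de \<and> Mval al be ga de 1 \<noteq> 1 \<and>
     (\<forall>i\<in>{1..4}. coefs_defined al be ga de i \<and> sig al be ga de i \<noteq> pi \<and>
        rval al be ga de i \<noteq> 1 \<and> sval al be ga de i \<noteq> 1 \<and> (\<exists>!t. tprop al be ga de i t)) \<and>
     (\<exists>e1\<in>{-1,1::complex}. \<exists>e2\<in>{-1,1::complex}. \<exists>e3\<in>{-1,1::complex}.
        tval al be ga de 1 + e1 * tval al be ga de 2 + e2 * tval al be ga de 3 + e3 * tval al be ga de 4
          \<in> latt (Mval al be ga de 1))"

end

theory Submission
  imports Defs
begin

text \<open>Replacing every angle \<open>x\<close> by \<open>pi - x\<close> turns \<open>\<sigma>\<^sub>i\<close> into \<open>2 pi - \<sigma>\<^sub>i\<close>, hence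
  \<open>\<sigma>\<^sub>i - x\<close> into \<open>pi - (\<sigma>\<^sub>i - x)\<close>; since \<open>sin (pi - y) = sin y\<close>, all of \<open>a\<^sub>i, b\<^sub>i, c\<^sub>i, d\<^sub>i\<close>
  and therefore \<open>M\<^sub>i, r\<^sub>i, s\<^sub>i, f\<^sub>i, p\<^sub>i, q\<^sub>i\<close> are unchanged, which settles (C1) and (C2).
  A signed sum \<open>\<alpha> \<plusminus> \<beta> \<plusminus> \<gamma> \<plusminus> \<delta>\<close> becomes an even multiple of \<open>pi\<close> minus itself, which
  settles (E). Only the side of \<open>pi\<close> on which \<open>\<sigma>\<^sub>i\<close> lies changes, so the segment on which
  \<open>t\<^sub>i\<close> is sought moves by \<open>\<plusminus>2K\<close>; as \<open>dn\<close> has period \<open>2K\<close> along the real axis, each \<open>t\<^sub>i\<close>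
  moves by \<open>\<plusminus>2K\<close>, and a signed sum of four such shifts lies in \<open>4K \<int> \<subseteq> \<Lambda>\<close>, which settles (C3).\<close>

abbreviation pi_minus :: "angfun \<Rightarrow> angfun" where
  "pi_minus al \<equiv> \<lambda>i. pi - al i"

lemma cos_even_multiple_add_pi_multiple:
  "cos (2 * of_nat m * (z + of_int n * complex_of_real pi)) = cos (2 * of_nat m * z)"
proof -
  have "2 * of_nat m * (z + of_int n * complex_of_real pi)
        = 2 * of_nat m * z + of_int (int m * n) * (2 * complex_of_real pi)"
    by (simp add: algebra_simps)
  then show ?thesis
    by (simp only: cos.plus_of_int)
qed

lemma theta3_add_pi_multiple: "theta3 q (z + of_int n * complex_of_real pi) = theta3 q z"
  unfolding theta3_def cos_even_multiple_add_pi_multiple ..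

lemma theta4_add_pi_multiple: "theta4 q (z + of_int n * complex_of_real pi) = theta4 q z"
  unfolding theta4_def cos_even_multiple_add_pi_multiple ..

lemma jdn_add_2K_multiple: "jdn (u + of_int n * complex_of_real (2 * ellK k)) k = jdn u k"
proof (cases "ellK k = 0")
  case False
  then have "complex_of_real pi * (u + of_int n * complex_of_real (2 * ellK k)) / complex_of_real (2 * ellK k)
             = complex_of_real pi * u / complex_of_real (2 * ellK k) + of_int n * complex_of_real pi"
    by (simp add: field_simps)
  then show ?thesis
    unfolding jdn_def Let_def by (simp only: theta3_add_pi_multiple theta4_add_pi_multiple)
qed simp

lemma jdn_add_2K_pm1:
  assumes "s \<in> {-1, 1}"
  shows "jdn (u + complex_of_real (2 * ellK k * s)) k = jdn u k"
proof -
  from assms consider "s = 1" | "s = -1"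
    by blast
  then show ?thesis
  proof cases
    case 1
    then show ?thesis using jdn_add_2K_multiple[of u 1 k] by simp
  next
    case 2
    then show ?thesis using jdn_add_2K_multiple[of u "-1" k] by simp
  qed
qed

lemma sig_pi_minus: "sig (pi_minus al) (pi_minus be) (pi_minus ga) (pi_minus de) i = 2 * pi - sig al be ga de i"
  unfolding sig_def by (simp add: field_simps)

lemma sin_sig_pi_minus_diff:
  "sin (sig (pi_minus al) (pi_minus be) (pi_minus ga) (pi_minus de) i - (pi - x)) = sin (sig al be ga de i - x)"
proof -
  have "sig (pi_minus al) (pi_minus be) (pi_minus ga) (pi_minus de) i - (pi - x) = pi - (sig al be ga de i - x)"
    by (simp add: sig_pi_minus)
  then show ?thesis
    by (simp only: sin_pi_minus)
qed

lemma coefs_pi_minus: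
  "acoef (pi_minus al) (pi_minus be) (pi_minus ga) (pi_minus de) = acoef al be ga de"
  "bcoef (pi_minus al) (pi_minus be) (pi_minus ga) (pi_minus de) = bcoef al be ga de"
  "ccoef (pi_minus al) (pi_minus be) (pi_minus ga) (pi_minus de) = ccoef al be ga de"
  "dcoef (pi_minus al) (pi_minus be) (pi_minus ga) (pi_minus de) = dcoef al be ga de"
  "coefs_defined (pi_minus al) (pi_minus be) (pi_minus ga) (pi_minus de) = coefs_defined al be ga de"
  by (simp_all add: fun_eq_iff acoef_def bcoef_def ccoef_def dcoef_def coefs_defined_def
      sin_sig_pi_minus_diff)

lemma values_pi_minus:
  "Mval (pi_minus al) (pi_minus be) (pi_minus ga) (pi_minus de) = Mval al be ga de"
  "rval (pi_minus al) (pi_minus be) (pi_minus ga) (pi_minus de) = rval al be ga de"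
  "sval (pi_minus al) (pi_minus be) (pi_minus ga) (pi_minus de) = sval al be ga de"
  "fval (pi_minus al) (pi_minus be) (pi_minus ga) (pi_minus de) = fval al be ga de"
  "pval (pi_minus al) (pi_minus be) (pi_minus ga) (pi_minus de) = pval al be ga de"
  "qval (pi_minus al) (pi_minus be) (pi_minus ga) (pi_minus de) = qval al be ga de"
  by (simp_all add: fun_eq_iff Mval_def rval_def sval_def fval_def pval_def qval_def coefs_pi_minus)

lemma condC1_pi_minus: "condC1 (pi_minus al) (pi_minus be) (pi_minus ga) (pi_minus de) \<longleftrightarrow> condC1 al be ga de"
  unfolding condC1_def values_pi_minus ..

lemma condC2_pi_minus: "condC2 (pi_minus al) (pi_minus be) (pi_minus ga) (pi_minus de) \<longleftrightarrow> condC2 al be ga de"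
  unfolding condC2_def values_pi_minus ..

lemma sum4_pm1_even:
  assumes "a \<in> {-1, 1}" "b \<in> {-1, 1}" "c \<in> {-1, 1}" "d \<in> {-1, 1}"
  shows "\<exists>m::int. a + b + c + d = 2 * (of_int m :: real)"
proof -
  have "a + b + c + d \<in> (\<lambda>m. 2 * of_int m) ` {-2..2}"
    using assms by (auto simp: image_def intro: bexI[of _ "-2"] bexI[of _ "-1"] bexI[of _ 0] bexI[of _ 1] bexI[of _ 2])
  then show ?thesis
    by blast
qed

lemma pi_minus_signed_sum:
  assumes "e1 \<in> {-1, 1}" "e2 \<in> {-1, 1}" "e3 \<in> {-1, 1}"
  shows "\<exists>j::int. (pi - a) + e1 * (pi - b) + e2 * (pi - c) + e3 * (pi - d)
                  = 2 * pi * of_int j - (a + e1 * b + e2 * c + e3 * d)"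
proof -
  obtain j :: int where j: "1 + e1 + e2 + e3 = 2 * of_int j"
    using sum4_pm1_even[of 1 e1 e2 e3] assms by auto
  have "(pi - a) + e1 * (pi - b) + e2 * (pi - c) + e3 * (pi - d)
        = pi * (1 + e1 + e2 + e3) - (a + e1 * b + e2 * c + e3 * d)"
    by (simp add: algebra_simps)
  then show ?thesis
    unfolding j by (intro exI[of _ j]) simp
qed

lemma all_not_2pi_multiple_reflect:
  "(\<forall>m::int. 2 * pi * of_int j - x \<noteq> 2 * pi * of_int m) \<longleftrightarrow> (\<forall>m::int. x \<noteq> 2 * pi * of_int m)"
proof -
  have shift: "2 * pi * of_int j - x = 2 * pi * of_int m \<longleftrightarrow> x = 2 * pi * of_int (j - m)" for m :: int
    by (auto simp: algebra_simps)
  show ?thesis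
  proof (intro iffI allI)
    fix m :: int
    assume "\<forall>m::int. 2 * pi * of_int j - x \<noteq> 2 * pi * of_int m"
    then have "2 * pi * of_int j - x \<noteq> 2 * pi * of_int (j - m)"
      by blast
    then show "x \<noteq> 2 * pi * of_int m"
      unfolding shift by simp
  next
    fix m :: int
    assume "\<forall>m::int. x \<noteq> 2 * pi * of_int m"
    then show "2 * pi * of_int j - x \<noteq> 2 * pi * of_int m"
      unfolding shift by blast
  qed
qed

lemma condE_pi_minus:
  "condE (pi_minus al) (pi_minus be) (pi_minus ga) (pi_minus de) \<longleftrightarrow> condE al be ga de"
proof -
  have "(\<forall>m::int. (pi - a) + e1 * (pi - b) + e2 * (pi - c) + e3 * (pi - d) \<noteq> 2 * pi * of_int m)
    \<longleftrightarrow> (\<forall>m::int. a + e1 * b + e2 * c + e3 * d \<noteq> 2 * pi * of_int m)"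
    if e: "e1 \<in> {-1, 1}" "e2 \<in> {-1, 1}" "e3 \<in> {-1, 1}" for a b c d e1 e2 e3
  proof -
    obtain j :: int where j: "(pi - a) + e1 * (pi - b) + e2 * (pi - c) + e3 * (pi - d)
                              = 2 * pi * of_int j - (a + e1 * b + e2 * c + e3 * d)"
      using pi_minus_signed_sum[OF e] by blast
    show ?thesis
      unfolding j by (rule all_not_2pi_multiple_reflect)
  qed
  then show ?thesis
    unfolding condE_def by (intro ball_cong refl) simp
qed

definition segment_base :: "real \<Rightarrow> complex \<Rightarrow> real \<Rightarrow> real" where
  "segment_base sg pq K =
     (if sg < pi then
        (if pq \<in> \<real> \<and> 0 < Re pq then 0 else if Re pq = 0 \<and> 0 < Im pq then K else 2 * K)
      else
        (if pq \<in> \<real> \<and> 0 < Re pq then 2 * K else if Re pq = 0 \<and> 0 < Im pq then 3 * K else 0))"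

lemma segment_base_2pi_minus:
  "sg \<noteq> pi \<Longrightarrow> \<exists>s\<in>{-1, 1}. segment_base (2 * pi - sg) pq K = segment_base sg pq K + 2 * K * s"
  unfolding segment_base_def by auto

lemma tprop_iff:
  "tprop al be ga de i t \<longleftrightarrow>
     (let M = Mval al be ga de i; k = modk M; f = fval al be ga de i;
          A = segment_base (sig al be ga de i) (pval al be ga de i * qval al be ga de i) (ellK k)
      in jdn t k = (if M < 1 then csqrt (complex_of_real f) else 1 / csqrt (complex_of_real f)) \<and>
         t \<in> open_segment (complex_of_real A) (complex_of_real A + \<i> * complex_of_real (ellK (compmod k))))"
  unfolding tprop_def segment_base_def Let_def by simp

lemma tprop_pi_minus:
  assumes "sig al be ga de i \<noteq> pi"
  shows "\<exists>s\<in>{-1, 1}. tprop (pi_minus al) (pi_minus be) (pi_minus ga) (pi_minus de) i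
           = (\<lambda>t. tprop al be ga de i (t - complex_of_real (2 * ellK (modk (Mval al be ga de i)) * s)))"
proof -
  define k where "k = modk (Mval al be ga de i)"
  define A where "A = segment_base (sig al be ga de i) (pval al be ga de i * qval al be ga de i) (ellK k)"
  obtain s :: real where s: "s \<in> {-1, 1}" and
    A': "segment_base (2 * pi - sig al be ga de i) (pval al be ga de i * qval al be ga de i) (ellK k)
         = A + 2 * ellK k * s"
    using segment_base_2pi_minus[OF assms] unfolding A_def by blast
  define c where "c = complex_of_real (2 * ellK k * s)"
  have jdn_c: "jdn (t - c) k = jdn t k" for t
    using jdn_add_2K_pm1[OF s, of "t - c" k] by (simp add: c_def)
  have segment_c: "t \<in> open_segment (complex_of_real (A + 2 * ellK k * s)) (complex_of_real (A + 2 * ellK k * s) + z)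
                 \<longleftrightarrow> t - c \<in> open_segment (complex_of_real A) (complex_of_real A + z)" for t z
    using open_segment_translation_eq[of c "t - c" "complex_of_real A" "complex_of_real A + z"]
    by (simp add: c_def algebra_simps)
  have "tprop (pi_minus al) (pi_minus be) (pi_minus ga) (pi_minus de) i t \<longleftrightarrow> tprop al be ga de i (t - c)" for t
    unfolding tprop_iff values_pi_minus sig_pi_minus Let_def k_def[symmetric] A' A_def[symmetric] jdn_c segment_c ..
  then show ?thesis
    using s unfolding c_def k_def by blast
qed

lemma Ex1_translate: "(\<exists>!t. P (t - c)) \<longleftrightarrow> (\<exists>!t::'a::ab_group_add. P t)"
  by (metis add_diff_cancel diff_add_cancel)

lemma The_translate:
  assumes "\<exists>!t::'a::ab_group_add. P t"
  shows "(THE t. P (t - c)) = (THE t. P t) + c"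
proof (rule the_equality)
  show "P ((THE t. P t) + c - c)"
    using theI'[OF assms] by simp
  show "y = (THE t. P t) + c" if "P (y - c)" for y
    using the1_equality[OF assms that] by simp
qed

lemma Ex1_tprop_pi_minus:
  assumes "sig al be ga de i \<noteq> pi"
  shows "(\<exists>!t. tprop (pi_minus al) (pi_minus be) (pi_minus ga) (pi_minus de) i t)
           \<longleftrightarrow> (\<exists>!t. tprop al be ga de i t)"
proof -
  obtain c where "tprop (pi_minus al) (pi_minus be) (pi_minus ga) (pi_minus de) i
                    = (\<lambda>t. tprop al be ga de i (t - c))"
    using tprop_pi_minus[OF assms] by blast
  then show ?thesis
    by (simp only: Ex1_translate)
qed

lemma tval_pi_minus:
  assumes "sig al be ga de i \<noteq> pi" and "\<exists>!t. tprop al be ga de i t"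
  shows "\<exists>s\<in>{-1, 1}. tval (pi_minus al) (pi_minus be) (pi_minus ga) (pi_minus de) i
           = tval al be ga de i + complex_of_real (2 * ellK (modk (Mval al be ga de i)) * s)"
proof -
  obtain s where s: "s \<in> {-1, 1}" and shift: "tprop (pi_minus al) (pi_minus be) (pi_minus ga) (pi_minus de) i
      = (\<lambda>t. tprop al be ga de i (t - complex_of_real (2 * ellK (modk (Mval al be ga de i)) * s)))"
    using tprop_pi_minus[OF assms(1)] by blast
  have "tval (pi_minus al) (pi_minus be) (pi_minus ga) (pi_minus de) i
        = tval al be ga de i + complex_of_real (2 * ellK (modk (Mval al be ga de i)) * s)"
    unfolding tval_def shift by (rule The_translate[OF assms(2)])
  with s show ?thesis
    by blast
qed

lemma latt_add_4K_multiple: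
  "x + complex_of_real (4 * ellK (modk M) * of_int m) \<in> latt M \<longleftrightarrow> x \<in> latt M"
proof -
  have add: "y + complex_of_real (4 * ellK (modk M) * of_int m') \<in> latt M" if "y \<in> latt M" for y m'
  proof -
    define k where "k = modk M"
    define w where "w = (if M < 1 then \<i> * complex_of_real (2 * ellK (compmod k))
                        else complex_of_real (2 * ellK k) + \<i> * complex_of_real (2 * ellK (compmod k)))"
    have latt_eq: "latt M = {complex_of_real (4 * ellK k * of_int m) + complex_of_int n * w | m n. True}"
      unfolding latt_def Let_def k_def w_def by (auto simp: algebra_simps)
    from that obtain m0 n where "y = complex_of_real (4 * ellK k * of_int m0) + complex_of_int n * w"
      unfolding latt_eq by blast
    then have "y + complex_of_real (4 * ellK k * of_int m') = complex_of_real (4 * ellK k * of_int (m0 + m')) + complex_of_int n * w"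
      by (simp add: algebra_simps)
    then show ?thesis
      unfolding latt_eq k_def[symmetric] by blast
  qed
  show ?thesis
    using add[of x m] add[of "x + complex_of_real (4 * ellK (modk M) * of_int m)" "- m"] by auto
qed

lemma pm1_mult: "r \<in> {-1, 1} \<Longrightarrow> s \<in> {-1, 1} \<Longrightarrow> r * s \<in> {-1, 1::real}"
  by auto

lemma signed_sum_pm1_even:
  assumes "s1 \<in> {-1, 1}" "s2 \<in> {-1, 1}" "s3 \<in> {-1, 1}" "s4 \<in> {-1, 1}"
    and "e1 \<in> {-1, 1}" "e2 \<in> {-1, 1}" "e3 \<in> {-1, 1}"
  shows "\<exists>m::int. complex_of_real s1 + e1 * complex_of_real s2 + e2 * complex_of_real s3 + e3 * complex_of_real s4
                  = 2 * of_int m"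
proof -
  have real_pm1: "\<exists>r\<in>{-1, 1}. e = complex_of_real r" if "e \<in> {-1, 1}" for e :: complex
    using that by auto
  obtain r1 r2 r3 where r: "r1 \<in> {-1, 1}" "r2 \<in> {-1, 1}" "r3 \<in> {-1, 1}"
    and e: "e1 = complex_of_real r1" "e2 = complex_of_real r2" "e3 = complex_of_real r3"
    using real_pm1[OF assms(5)] real_pm1[OF assms(6)] real_pm1[OF assms(7)] by blast
  obtain m :: int where m: "s1 + r1 * s2 + r2 * s3 + r3 * s4 = 2 * of_int m"
    using sum4_pm1_even[OF assms(1) pm1_mult[OF r(1) assms(2)] pm1_mult[OF r(2) assms(3)] pm1_mult[OF r(3) assms(4)]]
    by blast
  have "complex_of_real s1 + e1 * complex_of_real s2 + e2 * complex_of_real s3 + e3 * complex_of_real s4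
        = complex_of_real (s1 + r1 * s2 + r2 * s3 + r3 * s4)"
    unfolding e by simp
  also have "\<dots> = 2 * of_int m"
    unfolding m by simp
  finally show ?thesis ..
qed

definition signed_tsum ::
    "angfun \<Rightarrow> angfun \<Rightarrow> angfun \<Rightarrow> angfun \<Rightarrow> complex \<Rightarrow> complex \<Rightarrow> complex \<Rightarrow> complex"
  where "signed_tsum al be ga de e1 e2 e3 =
     tval al be ga de 1 + e1 * tval al be ga de 2 + e2 * tval al be ga de 3 + e3 * tval al be ga de 4"

definition C3_defined_at :: "angfun \<Rightarrow> angfun \<Rightarrow> angfun \<Rightarrow> angfun \<Rightarrow> nat \<Rightarrow> bool" where
  "C3_defined_at al be ga de i \<longleftrightarrow>
     coefs_defined al be ga de i \<and> sig al be ga de i \<noteq> pi \<and>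
     rval al be ga de i \<noteq> 1 \<and> sval al be ga de i \<noteq> 1 \<and> (\<exists>!t. tprop al be ga de i t)"

definition lattice_condition :: "angfun \<Rightarrow> angfun \<Rightarrow> angfun \<Rightarrow> angfun \<Rightarrow> bool" where
  "lattice_condition al be ga de \<longleftrightarrow>
     (\<exists>e1\<in>{-1, 1}. \<exists>e2\<in>{-1, 1}. \<exists>e3\<in>{-1, 1}.
        signed_tsum al be ga de e1 e2 e3 \<in> latt (Mval al be ga de 1))"

lemma condC3_iff:
  "condC3 al be ga de \<longleftrightarrow>
     condC1 al be ga de \<and> Mval al be ga de 1 \<noteq> 1 \<and> (\<forall>i\<in>{1..4}. C3_defined_at al be ga de i) \<and>
     lattice_condition al be ga de"
  unfolding condC3_def C3_defined_at_def lattice_condition_def signed_tsum_def ..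

lemma signed_tsum_pi_minus:
  assumes "condC1 al be ga de" and "\<forall>i\<in>{1..4}. sig al be ga de i \<noteq> pi \<and> (\<exists>!t. tprop al be ga de i t)"
    and "e1 \<in> {-1, 1}" "e2 \<in> {-1, 1}" "e3 \<in> {-1, 1}"
  shows "\<exists>m::int. signed_tsum (pi_minus al) (pi_minus be) (pi_minus ga) (pi_minus de) e1 e2 e3
                  = signed_tsum al be ga de e1 e2 e3
                    + complex_of_real (4 * ellK (modk (Mval al be ga de 1)) * of_int m)"
proof -
  define K where "K = ellK (modk (Mval al be ga de 1))"
  have "\<forall>i\<in>{1..4}. \<exists>s\<in>{-1, 1}. tval (pi_minus al) (pi_minus be) (pi_minus ga) (pi_minus de) i
                                = tval al be ga de i + complex_of_real (2 * K * s)"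
  proof
    fix i :: nat
    assume i: "i \<in> {1..4}"
    then have "Mval al be ga de i = Mval al be ga de 1"
      using assms(1) unfolding condC1_def by (auto simp: atLeastAtMost_iff le_Suc_eq eval_nat_numeral)
    then show "\<exists>s\<in>{-1, 1}. tval (pi_minus al) (pi_minus be) (pi_minus ga) (pi_minus de) i
                             = tval al be ga de i + complex_of_real (2 * K * s)"
      using tval_pi_minus assms(2) i unfolding K_def by metis
  qed
  then obtain s where s: "\<And>i. i \<in> {1..4} \<Longrightarrow> s i \<in> {-1, 1}"
    and tval_shift: "\<And>i. i \<in> {1..4} \<Longrightarrow> tval (pi_minus al) (pi_minus be) (pi_minus ga) (pi_minus de) i
                                           = tval al be ga de i + complex_of_real (2 * K * s i)"
    by metis
  obtain m :: int where m: "complex_of_real (s 1) + e1 * complex_of_real (s 2) + e2 * complex_of_real (s 3)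
                            + e3 * complex_of_real (s 4) = 2 * of_int m"
    using signed_sum_pm1_even[OF s s s s assms(3-5)] by force
  have "signed_tsum (pi_minus al) (pi_minus be) (pi_minus ga) (pi_minus de) e1 e2 e3
        = signed_tsum al be ga de e1 e2 e3 + complex_of_real (2 * K)
          * (complex_of_real (s 1) + e1 * complex_of_real (s 2) + e2 * complex_of_real (s 3) + e3 * complex_of_real (s 4))"
    unfolding signed_tsum_def by (simp add: tval_shift algebra_simps)
  also have "\<dots> = signed_tsum al be ga de e1 e2 e3 + complex_of_real (4 * K * of_int m)"
    unfolding m by simp
  finally show ?thesis
    unfolding K_def by blast
qed

lemma C3_defined_at_pi_minus:
  "C3_defined_at (pi_minus al) (pi_minus be) (pi_minus ga) (pi_minus de) i \<longleftrightarrow> C3_defined_at al be ga de i"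
proof (cases "sig al be ga de i = pi")
  case True
  then show ?thesis
    by (simp add: C3_defined_at_def sig_pi_minus)
next
  case False
  then show ?thesis
    by (simp add: C3_defined_at_def coefs_pi_minus values_pi_minus sig_pi_minus Ex1_tprop_pi_minus[OF False])
qed

lemma lattice_condition_pi_minus:
  assumes C1: "condC1 al be ga de" and defined: "\<forall>i\<in>{1..4}. C3_defined_at al be ga de i"
  shows "lattice_condition (pi_minus al) (pi_minus be) (pi_minus ga) (pi_minus de) \<longleftrightarrow> lattice_condition al be ga de"
  unfolding lattice_condition_def values_pi_minus
proof (intro bex_cong refl)
  have t_defined: "\<forall>i\<in>{1..4}. sig al be ga de i \<noteq> pi \<and> (\<exists>!t. tprop al be ga de i t)"
    using defined unfolding C3_defined_at_def by blast
  fix e1 e2 e3 :: complex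
  assume e: "e1 \<in> {-1, 1}" "e2 \<in> {-1, 1}" "e3 \<in> {-1, 1}"
  obtain m :: int where "signed_tsum (pi_minus al) (pi_minus be) (pi_minus ga) (pi_minus de) e1 e2 e3
      = signed_tsum al be ga de e1 e2 e3 + complex_of_real (4 * ellK (modk (Mval al be ga de 1)) * of_int m)"
    using signed_tsum_pi_minus[OF C1 t_defined e] by blast
  then show "signed_tsum (pi_minus al) (pi_minus be) (pi_minus ga) (pi_minus de) e1 e2 e3 \<in> latt (Mval al be ga de 1)
             \<longleftrightarrow> signed_tsum al be ga de e1 e2 e3 \<in> latt (Mval al be ga de 1)"
    by (simp only: latt_add_4K_multiple)
qed

lemma condC3_pi_minus:
  "condC3 (pi_minus al) (pi_minus be) (pi_minus ga) (pi_minus de) \<longleftrightarrow> condC3 al be ga de"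
  unfolding condC3_iff condC1_pi_minus C3_defined_at_pi_minus values_pi_minus(1)
  by (intro conj_cong refl) (rule lattice_condition_pi_minus)

theorem lemma3:
  fixes al be ga de :: "nat \<Rightarrow> real"
  assumes "\<forall>i\<in>{1..4}. al i \<in> {0<..<pi} \<and> be i \<in> {0<..<pi} \<and> ga i \<in> {0<..<pi} \<and> de i \<in> {0<..<pi}"
  defines "al' \<equiv> (\<lambda>i. pi - al i)" and "be' \<equiv> (\<lambda>i. pi - be i)"
      and "ga' \<equiv> (\<lambda>i. pi - ga i)" and "de' \<equiv> (\<lambda>i. pi - de i)"
  shows "(\<forall>i\<in>{1..4}. Mval al' be' ga' de' i = Mval al be ga de i \<and>
                      rval al' be' ga' de' i = rval al be ga de i \<and>
                      sval al' be' ga' de' i = sval al be ga de i \<and>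
                      fval al' be' ga' de' i = fval al be ga de i)
       \<and> (condE al' be' ga' de' \<longleftrightarrow> condE al be ga de)
       \<and> (condC1 al' be' ga' de' \<longleftrightarrow> condC1 al be ga de)
       \<and> (condC2 al' be' ga' de' \<longleftrightarrow> condC2 al be ga de)
       \<and> (condC3 al' be' ga' de' \<longleftrightarrow> condC3 al be ga de)"
  unfolding al'_def be'_def ga'_def de'_def
    values_pi_minus condE_pi_minus condC1_pi_minus condC2_pi_minus condC3_pi_minus
  by simp

end
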